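(* Let $w$ be a 2D-weight and $\mathfrak{K}_w$ the 2D-GWN operator associated with $w$. Then for every $\Phi\in\mathcal{S}^*(M)$, $$\mathfrak{K}_w\Phi=\sum_{j,k=0}^\infty w(j,k)\,\mathfrak{a}_k^\dagger\mathfrak{a}_j\mathfrak{a}_j^\dagger\mathfrak{a}_k\Phi,$$ where the double series converges naturally, i.e. the square partial sums $\sum_{j,k=0}^n w(j,k)\mathfrak{a}_k^\dagger\mathfrak{a}_j\mathfrak{a}_j^\dagger\mathfrak{a}_k\Phi$ converge to $\mathfrak{K}_w\Phi$ in the strong topology of $\mathcal{S}^*(M)$ as $n\to\infty$.
   Context: Setting: $M$ a discrete-time normal martingale with the chaotic representation property; $Z_0=M_0$, $Z_n=M_n-M_{n-1}$; $\Gamma$ the finite subsets of $\mathbb{N}$, $Z_\emptyset=1$, $Z_\sigma=\prod_{j\in\sigma}Z_j$, an orthonormal basis of $\mathcal{L}^2(M)=L^2(\Omega,\sigma(M_n;n\ge0),P)$. $\lambda_\emptyset=1$, $\lambda_\sigma=\prod_{k\in\sigma}(k+1)$; $\mathcal{S}(M)=\{\xi\in\mathcal{L}^2(M):\sum_\sigma\lambda_\sigma^{2p}|\langle Z_\sigma,\xi\rangle|^2<\infty\ \forall p\ge0\}$ with the topology of these Hilbertian norms (countably Hilbertian nuclear), $\mathcal{S}^*(M)$ its dual with the strong topology. Fock transform $\widehat\Phi(\sigma)=\Phi(Z_\sigma)$ (determines $\Phi$). $\mathbf{1}_\sigma$ is the indicator of $\sigma$. A 2D-weight is a nonnegative $w$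 on $\mathbb{N}^2$ with $\sup_k\sum_jw(j,k)<\infty$; its spectral function is $\vartheta_w(\sigma)=\sum_j\mathbf{1}_\sigma(j)w(j,j)+\sum_{j,k}(1-\mathbf{1}_\sigma(j))\mathbf{1}_\sigma(k)w(j,k)$; the 2D-GWN operator $\mathfrak{K}_w$ is the unique continuous linear operator on $\mathcal{S}^*(M)$ with $\widehat{\mathfrak{K}_w\Phi}(\sigma)=\vartheta_w(\sigma)\widehat\Phi(\sigma)$. For $k\ge0$, $\mathfrak{a}_k,\mathfrak{a}_k^\dagger$ are the continuous linear operators on $\mathcal{S}^*(M)$ determined by $\widehat{\mathfrak{a}_k\Phi}(\sigma)=(1-\mathbf{1}_\sigma(k))\widehat\Phi(\sigma\cup\{k\})$ and $\widehat{\mathfrak{a}_k^\dagger\Phi}(\sigma)=\mathbf{1}_\sigma(k)\widehat\Phi(\sigma\setminus\{k\})$. *)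

theory Defs
  imports "HOL-Analysis.Analysis"
begin

text \<open>
A test function xi in S(M) is represented by its coefficient family
x sigma = <Z_sigma, xi> (zero outside Gamma); a generalized functional Phi in
S*(M) is a continuous linear functional on this coefficient space.
\<close>

definition Gam :: "nat set set" where
  "Gam = {\<sigma>. finite \<sigma>}"

definition lam :: "nat set \<Rightarrow> real" where
  "lam \<sigma> = real (\<Prod>k\<in>\<sigma>. k + 1)"

definition ind :: "nat set \<Rightarrow> nat \<Rightarrow> real" where
  "ind \<sigma> j = (if j \<in> \<sigma> then 1 else 0)"

definition pnorm :: "real \<Rightarrow> (nat set \<Rightarrow> complex) \<Rightarrow> real" where
  "pnorm p x = sqrt (\<Sum>\<^sub>\<infinity>\<sigma>\<in>Gam. lam \<sigma> powr (2 * p) * (cmod (x \<sigma>))\<^sup>2)"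

definition Sspace :: "(nat set \<Rightarrow> complex) set" where
  "Sspace = {x. (\<forall>\<sigma>. \<sigma> \<notin> Gam \<longrightarrow> x \<sigma> = 0) \<and>
     (\<forall>p\<ge>0. (\<lambda>\<sigma>. lam \<sigma> powr (2 * p) * (cmod (x \<sigma>))\<^sup>2) summable_on Gam)}"

definition S_bounded :: "(nat set \<Rightarrow> complex) set \<Rightarrow> bool" where
  "S_bounded B \<longleftrightarrow> B \<subseteq> Sspace \<and> (\<forall>p\<ge>0. \<exists>C. \<forall>x\<in>B. pnorm p x \<le> C)"

definition Sdual :: "((nat set \<Rightarrow> complex) \<Rightarrow> complex) set" where
  "Sdual = {\<Phi>. (\<forall>x y. x \<in> Sspace \<longrightarrow> y \<in> Sspace \<longrightarrow> \<Phi> (\<lambda>\<sigma>. x \<sigma> + y \<sigma>) = \<Phi> x + \<Phi> y)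
     \<and> (\<forall>c x. x \<in> Sspace \<longrightarrow> \<Phi> (\<lambda>\<sigma>. c * x \<sigma>) = c * \<Phi> x)
     \<and> (\<exists>p\<ge>0. \<exists>C. \<forall>x\<in>Sspace. cmod (\<Phi> x) \<le> C * pnorm p x)
     \<and> (\<forall>x. x \<notin> Sspace \<longrightarrow> \<Phi> x = 0)}"

definition Zb :: "nat set \<Rightarrow> (nat set \<Rightarrow> complex)" where
  "Zb \<sigma> = (\<lambda>\<tau>. if \<tau> = \<sigma> then 1 else 0)"

definition fock :: "((nat set \<Rightarrow> complex) \<Rightarrow> complex) \<Rightarrow> nat set \<Rightarrow> complex" where
  "fock \<Phi> \<sigma> = \<Phi> (Zb \<sigma>)"

definition strong_conv ::
  "(nat \<Rightarrow> ((nat set \<Rightarrow> complex) \<Rightarrow> complex)) \<Rightarrow> ((nat set \<Rightarrow> complex) \<Rightarrow> complex) \<Rightarrow> bool" where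
  "strong_conv F \<Psi> \<longleftrightarrow> (\<forall>B. S_bounded B \<longrightarrow>
     (\<forall>\<epsilon>>0. eventually (\<lambda>n. \<forall>x\<in>B. cmod (F n x - \<Psi> x) < \<epsilon>) sequentially))"

definition is_2D_weight :: "(nat \<Rightarrow> nat \<Rightarrow> real) \<Rightarrow> bool" where
  "is_2D_weight w \<longleftrightarrow> (\<forall>j k. 0 \<le> w j k) \<and> (\<forall>k. summable (\<lambda>j. w j k))
     \<and> bdd_above (range (\<lambda>k. \<Sum>j. w j k))"

definition spectral :: "(nat \<Rightarrow> nat \<Rightarrow> real) \<Rightarrow> nat set \<Rightarrow> real" where
  "spectral w \<sigma> = (\<Sum>\<^sub>\<infinity>j. ind \<sigma> j * w j j)
      + (\<Sum>\<^sub>\<infinity>(j,k). (1 - ind \<sigma> j) * ind \<sigma> k * w j k)"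

definition GWN2 :: "(nat \<Rightarrow> nat \<Rightarrow> real) \<Rightarrow> ((nat set \<Rightarrow> complex) \<Rightarrow> complex) \<Rightarrow> ((nat set \<Rightarrow> complex) \<Rightarrow> complex)" where
  "GWN2 w \<Phi> = (THE \<Psi>. \<Psi> \<in> Sdual \<and>
     (\<forall>\<sigma>\<in>Gam. fock \<Psi> \<sigma> = complex_of_real (spectral w \<sigma>) * fock \<Phi> \<sigma>))"

definition ann :: "nat \<Rightarrow> ((nat set \<Rightarrow> complex) \<Rightarrow> complex) \<Rightarrow> ((nat set \<Rightarrow> complex) \<Rightarrow> complex)" where
  "ann k \<Phi> = (THE \<Psi>. \<Psi> \<in> Sdual \<and>
     (\<forall>\<sigma>\<in>Gam. fock \<Psi> \<sigma> = complex_of_real (1 - ind \<sigma> k) * fock \<Phi> (insert k \<sigma>)))"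

definition cre :: "nat \<Rightarrow> ((nat set \<Rightarrow> complex) \<Rightarrow> complex) \<Rightarrow> ((nat set \<Rightarrow> complex) \<Rightarrow> complex)" where
  "cre k \<Phi> = (THE \<Psi>. \<Psi> \<in> Sdual \<and>
     (\<forall>\<sigma>\<in>Gam. fock \<Psi> \<sigma> = complex_of_real (ind \<sigma> k) * fock \<Phi> (\<sigma> - {k})))"

end

theory Submission
  imports Defs
begin

text \<open>
All operators involved are diagonal in the chaos basis: the Fock transform of
$a_k^\dagger a_j a_j^\dagger a_k \Phi$ is that of $\Phi$ multiplied by
$1_\sigma(k)(1 - 1_\sigma(j))$ for $j \neq k$ and by $1_\sigma(k)$ for $j = k$. Hence the square
partial sums multiply $\widehat\Phi(\sigma)$ by numbers $\vartheta_n(\sigma)$ increasing to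
$\vartheta_w(\sigma)$, and $0 \le \vartheta_w(\sigma) \le 2W|\sigma| \le 2W\lambda_\sigma$, where $W$
bounds the column sums of $w$. If $|\widehat\Phi(\sigma)| \le C\lambda_\sigma^r$, pairing the error
with a test function $\xi$ gives the bound
$\|\xi\|_{r+3} \, C \sum_\sigma (\vartheta_w(\sigma) - \vartheta_n(\sigma))/\lambda_\sigma^3$.
The sum tends to $0$ by dominated convergence with dominating function $2W/\lambda_\sigma^2$,
which is summable because $\sum_\sigma \lambda_\sigma^{-2} = \prod_k (1 + (k+1)^{-2}) < \infty$;
since only the norm $\|\xi\|_{r+3}$ enters, the convergence is uniform on bounded sets.
\<close>

section \<open>Chaos weights\<close>

lemma lam_ge_1: "lam \<sigma> \<ge> 1"
proof -
  have "1 \<le> (\<Prod>k\<in>\<sigma>. k + 1)" by (rule prod_ge_1) simp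
  then show ?thesis unfolding lam_def by linarith
qed

lemma lam_pos: "lam \<sigma> > 0"
  using lam_ge_1[of \<sigma>] by linarith

lemma lam_neq_0 [simp]: "lam \<sigma> \<noteq> 0"
  using lam_pos[of \<sigma>] by linarith

lemma lam_insert_le: "finite \<sigma> \<Longrightarrow> lam (insert k \<sigma>) \<le> (real k + 1) * lam \<sigma>"
  using lam_ge_1[of \<sigma>]
  by (cases "k \<in> \<sigma>") (simp_all add: insert_absorb lam_def algebra_simps)

lemma lam_remove: "finite \<sigma> \<Longrightarrow> k \<in> \<sigma> \<Longrightarrow> lam \<sigma> = (real k + 1) * lam (\<sigma> - {k})"
  unfolding lam_def by (simp add: prod.remove algebra_simps)

lemma lam_Diff_singleton_le: "finite \<sigma> \<Longrightarrow> lam (\<sigma> - {k}) \<le> lam \<sigma>"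
  using lam_remove[of \<sigma> k] lam_ge_1[of "\<sigma> - {k}"]
  by (cases "k \<in> \<sigma>") (simp_all add: distrib_right)

lemma card_le_lam:
  assumes "finite \<sigma>"
  shows "real (card \<sigma>) \<le> lam \<sigma>"
proof -
  define L where "L = (\<Prod>k\<in>\<sigma>. k + 1)"
  have "real k + 1 \<le> real L" if "k \<in> \<sigma>" for k
  proof -
    have "(real k + 1) * 1 \<le> (real k + 1) * lam (\<sigma> - {k})"
      using lam_ge_1[of "\<sigma> - {k}"] by (intro mult_left_mono) auto
    then show ?thesis using lam_remove[OF assms that] by (simp add: L_def lam_def)
  qed
  then have "\<sigma> \<subseteq> {..<L}" by force
  then have "card \<sigma> \<le> L" using card_mono[of "{..<L}" \<sigma>] by simp
  then show ?thesis unfolding lam_def L_def of_nat_le_iff .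
qed

lemma summable_on_inverse_lam_sq: "(\<lambda>\<sigma>. 1 / lam \<sigma> ^ 2) summable_on Gam"
proof (rule nonneg_bdd_above_summable_on)
  show "\<And>x. x \<in> Gam \<Longrightarrow> 0 \<le> 1 / lam x ^ 2" by simp
  define a where "a = (\<lambda>k::nat. 1 / (real k + 1) ^ 2)"
  have a0: "a k \<ge> 0" for k by (simp add: a_def)
  have "summable (\<lambda>n. inverse (real (Suc n) ^ 2))"
    using inverse_power_summable[of 2, where 'a=real] by (subst summable_Suc_iff) simp
  then have a_summable: "summable a" by (simp add: a_def divide_inverse add.commute)
  have lam_prod: "1 / lam \<sigma> ^ 2 = (\<Prod>k\<in>\<sigma>. a k)" if "finite \<sigma>" for \<sigma>
    using that by (simp add: lam_def a_def of_nat_prod add.commute prod_dividef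
        power_one_over prod_power_distrib)
  show "bdd_above (sum (\<lambda>\<sigma>. 1 / lam \<sigma> ^ 2) ` {F. F \<subseteq> Gam \<and> finite F})"
  proof (rule bdd_aboveI, clarify)
    fix F assume F: "F \<subseteq> Gam" "finite F"
    define N where "N = \<Union>F"
    have fN: "finite N" using F by (auto simp: N_def Gam_def)
    have "sum (\<lambda>\<sigma>. 1 / lam \<sigma> ^ 2) F = (\<Sum>\<sigma>\<in>F. \<Prod>k\<in>\<sigma>. a k)"
      using F by (intro sum.cong refl) (auto simp: Gam_def lam_prod)
    also have "\<dots> \<le> (\<Sum>\<sigma>\<in>Pow N. \<Prod>k\<in>\<sigma>. a k)"
      using F fN by (intro sum_mono2) (auto intro!: prod_nonneg simp: a0 N_def)
    also have "\<dots> = (\<Prod>k\<in>N. a k + 1)"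
      using prod_add[OF fN, of a "\<lambda>_. 1"] by simp
    also have "\<dots> \<le> (\<Prod>k\<in>N. exp (a k))"
      by (intro prod_mono) (auto simp: a0 add.commute)
    also have "\<dots> = exp (sum a N)" by (simp add: exp_sum[OF fN])
    also have "\<dots> \<le> exp (suminf a)"
      using sum_le_suminf[OF a_summable fN] a0 by simp
    finally show "sum (\<lambda>\<sigma>. 1 / lam \<sigma> ^ 2) F \<le> exp (suminf a)" .
  qed
qed

lemma Gam_insert [simp]: "\<sigma> \<in> Gam \<Longrightarrow> insert k \<sigma> \<in> Gam"
  by (simp add: Gam_def)

lemma Gam_Diff [simp]: "\<sigma> \<in> Gam \<Longrightarrow> \<sigma> - A \<in> Gam"
  by (simp add: Gam_def)

section \<open>Test functions and generalized functionals\<close>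

definition pnorm_summand :: "nat \<Rightarrow> (nat set \<Rightarrow> complex) \<Rightarrow> nat set \<Rightarrow> real" where
  "pnorm_summand q x \<sigma> = lam \<sigma> ^ (2 * q) * (cmod (x \<sigma>))\<^sup>2"

lemma pnorm_summand_nonneg: "pnorm_summand q x \<sigma> \<ge> 0"
  unfolding pnorm_summand_def using lam_pos[of \<sigma>] by simp

lemma lam_powr_of_nat: "lam \<sigma> powr (2 * real q) = lam \<sigma> ^ (2 * q)"
  using lam_pos[of \<sigma>] by (metis of_nat_mult of_nat_numeral powr_realpow)

lemma pnorm_of_nat: "pnorm (real q) x = sqrt (infsum (pnorm_summand q x) Gam)"
  unfolding pnorm_def pnorm_summand_def lam_powr_of_nat ..

lemma pnorm_nonneg: "pnorm p x \<ge> 0"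
  unfolding pnorm_def by (simp add: infsum_nonneg)

lemma Sspace_vanishes: "x \<in> Sspace \<Longrightarrow> \<sigma> \<notin> Gam \<Longrightarrow> x \<sigma> = 0"
  unfolding Sspace_def by blast

lemma Sspace_summable: "x \<in> Sspace \<Longrightarrow> pnorm_summand q x summable_on Gam"
  unfolding Sspace_def pnorm_summand_def lam_powr_of_nat[symmetric] by auto

text \<open>Integer exponents suffice, since $\lambda_\sigma \ge 1$ makes the norms increase with $p$.\<close>

lemma SspaceI:
  assumes "\<And>\<sigma>. \<sigma> \<notin> Gam \<Longrightarrow> x \<sigma> = 0" and summable: "\<And>q. pnorm_summand q x summable_on Gam"
  shows "x \<in> Sspace"
  unfolding Sspace_def
proof (intro CollectI conjI allI impI assms(1))
  fix p :: real assume "0 \<le> p"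
  define q where "q = nat \<lceil>p\<rceil>"
  have "p \<le> real q" unfolding q_def by linarith
  show "(\<lambda>\<sigma>. lam \<sigma> powr (2 * p) * (cmod (x \<sigma>))\<^sup>2) summable_on Gam"
  proof (rule summable_on_comparison_test[OF summable[of q]])
    fix \<sigma>
    have "lam \<sigma> powr (2 * p) \<le> lam \<sigma> powr (2 * real q)"
      using lam_ge_1[of \<sigma>] \<open>p \<le> real q\<close> by (intro powr_mono) auto
    then show "lam \<sigma> powr (2 * p) * (cmod (x \<sigma>))\<^sup>2 \<le> pnorm_summand q x \<sigma>"
      unfolding pnorm_summand_def lam_powr_of_nat[symmetric] by (intro mult_right_mono) auto
  qed simp
qed

lemma pnorm_mono:
  assumes "x \<in> Sspace" "0 \<le> p" "p \<le> p'"
  shows "pnorm p x \<le> pnorm p' x"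
  unfolding pnorm_def
proof (intro real_sqrt_le_mono infsum_mono)
  show "(\<lambda>\<sigma>. lam \<sigma> powr (2 * p) * (cmod (x \<sigma>))\<^sup>2) summable_on Gam"
    "(\<lambda>\<sigma>. lam \<sigma> powr (2 * p') * (cmod (x \<sigma>))\<^sup>2) summable_on Gam"
    using assms unfolding Sspace_def by auto
  fix \<sigma>
  have "lam \<sigma> powr (2 * p) \<le> lam \<sigma> powr (2 * p')"
    using lam_ge_1[of \<sigma>] assms by (intro powr_mono) auto
  then show "lam \<sigma> powr (2 * p) * (cmod (x \<sigma>))\<^sup>2 \<le> lam \<sigma> powr (2 * p') * (cmod (x \<sigma>))\<^sup>2"
    by (intro mult_right_mono) auto
qed

lemma Sspace_dominated:
  assumes x: "x \<in> Sspace" and z: "z \<in> Sspace" and "a \<ge> 0" "b \<ge> 0"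
    and bound: "\<And>\<sigma>. cmod (y \<sigma>) \<le> a * cmod (x \<sigma>) + b * cmod (z \<sigma>)"
  shows "y \<in> Sspace"
proof (rule SspaceI)
  fix \<sigma> assume "\<sigma> \<notin> Gam"
  then show "y \<sigma> = 0" using bound[of \<sigma>] Sspace_vanishes[OF x] Sspace_vanishes[OF z] by simp
next
  fix q
  have "(\<lambda>\<sigma>. 2 * a\<^sup>2 * pnorm_summand q x \<sigma> + 2 * b\<^sup>2 * pnorm_summand q z \<sigma>) summable_on Gam"
    by (intro summable_on_add summable_on_cmult_right Sspace_summable x z)
  then show "pnorm_summand q y summable_on Gam"
  proof (rule summable_on_comparison_test)
    fix \<sigma>
    have "(cmod (y \<sigma>))\<^sup>2 \<le> (a * cmod (x \<sigma>) + b * cmod (z \<sigma>))\<^sup>2"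
      using bound[of \<sigma>] by (intro power_mono) auto
    also have "\<dots> \<le> 2 * a\<^sup>2 * (cmod (x \<sigma>))\<^sup>2 + 2 * b\<^sup>2 * (cmod (z \<sigma>))\<^sup>2"
      using sum_squares_ge_zero[of "a * cmod (x \<sigma>) - b * cmod (z \<sigma>)" 0]
      by (simp add: power2_eq_square algebra_simps)
    finally have "(cmod (y \<sigma>))\<^sup>2 \<le> 2 * a\<^sup>2 * (cmod (x \<sigma>))\<^sup>2 + 2 * b\<^sup>2 * (cmod (z \<sigma>))\<^sup>2" .
    then have "lam \<sigma> ^ (2 * q) * (cmod (y \<sigma>))\<^sup>2
        \<le> lam \<sigma> ^ (2 * q) * (2 * a\<^sup>2 * (cmod (x \<sigma>))\<^sup>2 + 2 * b\<^sup>2 * (cmod (z \<sigma>))\<^sup>2)"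
      using lam_pos[of \<sigma>] by (intro mult_left_mono) auto
    then show "pnorm_summand q y \<sigma> \<le> 2 * a\<^sup>2 * pnorm_summand q x \<sigma> + 2 * b\<^sup>2 * pnorm_summand q z \<sigma>"
      unfolding pnorm_summand_def by (simp add: algebra_simps)
  qed (rule pnorm_summand_nonneg)
qed

lemma Sspace_add: "x \<in> Sspace \<Longrightarrow> y \<in> Sspace \<Longrightarrow> (\<lambda>\<sigma>. x \<sigma> + y \<sigma>) \<in> Sspace"
  by (rule Sspace_dominated[where a=1 and b=1 and x=x and z=y]) (auto simp: norm_triangle_ineq)

lemma Sspace_scale: "x \<in> Sspace \<Longrightarrow> (\<lambda>\<sigma>. c * x \<sigma>) \<in> Sspace"
  by (rule Sspace_dominated[where a="cmod c" and b=0 and z=x]) (auto simp: norm_mult)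

lemma Sspace_restrict: "x \<in> Sspace \<Longrightarrow> (\<lambda>\<sigma>. if \<sigma> \<in> A then x \<sigma> else 0) \<in> Sspace"
  by (rule Sspace_dominated[where a=1 and b=0 and z=x]) auto

lemma Sspace_finite_support:
  assumes "finite F" "F \<subseteq> Gam" "\<And>\<sigma>. \<sigma> \<notin> F \<Longrightarrow> x \<sigma> = 0"
  shows "x \<in> Sspace"
proof (rule SspaceI)
  fix \<sigma> assume "\<sigma> \<notin> Gam" then show "x \<sigma> = 0" using assms by auto
next
  fix q
  have "pnorm_summand q x summable_on F" using assms(1) by simp
  then show "pnorm_summand q x summable_on Gam"
    by (rule summable_on_cong_neutral[THEN iffD1, rotated -1])
       (use assms in \<open>auto simp: pnorm_summand_def\<close>)
qed

lemma Zb_in_Sspace: "\<sigma> \<in> Gam \<Longrightarrow> Zb \<sigma> \<in> Sspace"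
  by (rule Sspace_finite_support[of "{\<sigma>}"]) (auto simp: Zb_def)

lemma pnorm_Zb: "\<sigma> \<in> Gam \<Longrightarrow> pnorm (real q) (Zb \<sigma>) = lam \<sigma> ^ q"
proof -
  assume "\<sigma> \<in> Gam"
  then have "infsum (pnorm_summand q (Zb \<sigma>)) Gam = infsum (pnorm_summand q (Zb \<sigma>)) {\<sigma>}"
    by (intro infsum_cong_neutral) (auto simp: Zb_def pnorm_summand_def)
  also have "\<dots> = (lam \<sigma> ^ q)\<^sup>2"
    by (simp add: Zb_def pnorm_summand_def power_mult power2_eq_square mult.commute)
  finally show ?thesis using lam_pos[of \<sigma>] by (simp add: pnorm_of_nat)
qed

lemma coeff_le_pnorm:
  assumes x: "x \<in> Sspace" and "\<sigma> \<in> Gam"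
  shows "lam \<sigma> ^ q * cmod (x \<sigma>) \<le> pnorm (real q) x"
proof -
  have "pnorm_summand q x \<sigma> = infsum (pnorm_summand q x) {\<sigma>}" by simp
  also have "\<dots> \<le> infsum (pnorm_summand q x) Gam"
    by (rule infsum_mono_neutral[OF _ Sspace_summable[OF x]])
       (use \<open>\<sigma> \<in> Gam\<close> pnorm_summand_nonneg in auto)
  finally have "sqrt (pnorm_summand q x \<sigma>) \<le> pnorm (real q) x"
    unfolding pnorm_of_nat by simp
  moreover have "pnorm_summand q x \<sigma> = (lam \<sigma> ^ q * cmod (x \<sigma>))\<^sup>2"
    unfolding pnorm_summand_def power_even_eq power_mult_distrib ..
  ultimately show ?thesis using lam_pos[of \<sigma>] by simp
qed

lemma Sdual_add: "\<Psi> \<in> Sdual \<Longrightarrow> x \<in> Sspace \<Longrightarrow> y \<in> Sspace \<Longrightarrow> \<Psi> (\<lambda>\<sigma>. x \<sigma> + y \<sigma>) = \<Psi> x + \<Psi> y"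
  unfolding Sdual_def by blast

lemma Sdual_scale: "\<Psi> \<in> Sdual \<Longrightarrow> x \<in> Sspace \<Longrightarrow> \<Psi> (\<lambda>\<sigma>. c * x \<sigma>) = c * \<Psi> x"
  unfolding Sdual_def by blast

lemma Sdual_outside: "\<Psi> \<in> Sdual \<Longrightarrow> x \<notin> Sspace \<Longrightarrow> \<Psi> x = 0"
  unfolding Sdual_def by blast

lemma Sdual_bound:
  assumes "\<Psi> \<in> Sdual"
  obtains q :: nat and C where "C \<ge> 0" "\<And>x. x \<in> Sspace \<Longrightarrow> cmod (\<Psi> x) \<le> C * pnorm (real q) x"
proof -
  from assms obtain p C where "p \<ge> 0" and C: "\<forall>x\<in>Sspace. cmod (\<Psi> x) \<le> C * pnorm p x"
    unfolding Sdual_def by blast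
  define q where "q = nat \<lceil>p\<rceil>"
  have "p \<le> real q" unfolding q_def by linarith
  show ?thesis
  proof (rule that[of "max C 0" q])
    fix x assume x: "x \<in> Sspace"
    have "cmod (\<Psi> x) \<le> C * pnorm p x" using C x by blast
    also have "\<dots> \<le> max C 0 * pnorm p x" by (intro mult_right_mono pnorm_nonneg) auto
    also have "\<dots> \<le> max C 0 * pnorm (real q) x"
      by (intro mult_left_mono pnorm_mono x \<open>p \<ge> 0\<close> \<open>p \<le> real q\<close>) auto
    finally show "cmod (\<Psi> x) \<le> max C 0 * pnorm (real q) x" .
  qed auto
qed

section \<open>Generalized functionals through their Fock transforms\<close>

lemma Sdual_finite_support:
  assumes \<Psi>: "\<Psi> \<in> Sdual" and "finite F" "F \<subseteq> Gam"
  shows "\<Psi> (\<lambda>\<tau>. if \<tau> \<in> F then x \<tau> else 0) = (\<Sum>\<sigma>\<in>F. x \<sigma> * fock \<Psi> \<sigma>)"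
  using \<open>finite F\<close> \<open>F \<subseteq> Gam\<close>
proof (induction F rule: finite_induct)
  case empty
  have "(\<lambda>\<tau>::nat set. 0::complex) \<in> Sspace" by (rule Sspace_finite_support[of "{}"]) auto
  from Sdual_scale[OF \<Psi> this, of 0] show ?case by simp
next
  case (insert a F)
  then have a: "a \<in> Gam" and "F \<subseteq> Gam" by auto
  have xF: "(\<lambda>\<tau>. if \<tau> \<in> F then x \<tau> else 0) \<in> Sspace"
    by (rule Sspace_finite_support[OF insert.hyps(1) \<open>F \<subseteq> Gam\<close>]) auto
  have "(\<lambda>\<tau>. if \<tau> \<in> insert a F then x \<tau> else 0) = (\<lambda>\<tau>. (if \<tau> \<in> F then x \<tau> else 0) + x a * Zb a \<tau>)"
    using insert.hyps(2) by (auto simp: Zb_def)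
  moreover have "\<Psi> (\<lambda>\<tau>. x a * Zb a \<tau>) = x a * fock \<Psi> a"
    unfolding fock_def by (rule Sdual_scale[OF \<Psi> Zb_in_Sspace[OF a]])
  ultimately show ?case
    using Sdual_add[OF \<Psi> xF Sspace_scale[OF Zb_in_Sspace[OF a]]] insert \<open>F \<subseteq> Gam\<close> by simp
qed

text \<open>The pairing $\langle\langle \Psi, \xi \rangle\rangle = \sum_\sigma \xi_\sigma \widehat\Psi(\sigma)$: the tail of
  $\xi$ outside a finite $F$ is small in the norm controlling $\Psi$.\<close>

lemma Sdual_has_sum:
  assumes \<Psi>: "\<Psi> \<in> Sdual" and x: "x \<in> Sspace"
  shows "((\<lambda>\<sigma>. x \<sigma> * fock \<Psi> \<sigma>) has_sum \<Psi> x) Gam"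
proof -
  obtain q C where C: "\<And>y. y \<in> Sspace \<Longrightarrow> cmod (\<Psi> y) \<le> C * pnorm (real q) y"
    using Sdual_bound[OF \<Psi>] by blast
  define I where "I = infsum (pnorm_summand q x) Gam"
  have tail: "cmod (\<Psi> x - (\<Sum>\<sigma>\<in>F. x \<sigma> * fock \<Psi> \<sigma>)) \<le> C * sqrt (I - sum (pnorm_summand q x) F)"
    if F: "finite F" "F \<subseteq> Gam" for F
  proof -
    define xF where "xF = (\<lambda>\<tau>. if \<tau> \<in> F then x \<tau> else 0)"
    define xR where "xR = (\<lambda>\<tau>. if \<tau> \<in> - F then x \<tau> else 0)"
    have xR: "xR \<in> Sspace" unfolding xR_def by (rule Sspace_restrict[OF x])
    have xF: "xF \<in> Sspace" unfolding xF_def by (rule Sspace_restrict[OF x])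
    have "\<Psi> x = \<Psi> (\<lambda>\<tau>. xF \<tau> + xR \<tau>)"
      by (rule arg_cong[where f=\<Psi>], rule ext) (simp add: xF_def xR_def)
    also have "\<dots> = \<Psi> xF + \<Psi> xR" by (rule Sdual_add[OF \<Psi> xF xR])
    finally have "\<Psi> x = \<Psi> xF + \<Psi> xR" .
    then have "\<Psi> x - (\<Sum>\<sigma>\<in>F. x \<sigma> * fock \<Psi> \<sigma>) = \<Psi> xR"
      using Sdual_finite_support[OF \<Psi> F] by (simp add: xF_def)
    moreover have "infsum (pnorm_summand q xR) Gam = infsum (pnorm_summand q x) (Gam - F)"
      by (rule infsum_cong_neutral) (auto simp: xR_def pnorm_summand_def)
    then have "pnorm (real q) xR = sqrt (I - sum (pnorm_summand q x) F)"
      using infsum_Diff[OF Sspace_summable[OF x] _ F(2), of q] F(1) by (simp add: I_def pnorm_of_nat)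
    ultimately show ?thesis using C[OF xR] by simp
  qed
  have "((\<lambda>F. C * sqrt (I - sum (pnorm_summand q x) F)) \<longlongrightarrow> C * sqrt (I - I)) (finite_subsets_at_top Gam)"
    using Sspace_summable[OF x, of q] unfolding I_def summable_iff_has_sum_infsum has_sum_def
    by (intro tendsto_intros)
  then have "((\<lambda>F. C * sqrt (I - sum (pnorm_summand q x) F)) \<longlongrightarrow> 0) (finite_subsets_at_top Gam)"
    by simp
  then have "((\<lambda>F. \<Psi> x - (\<Sum>\<sigma>\<in>F. x \<sigma> * fock \<Psi> \<sigma>)) \<longlongrightarrow> 0) (finite_subsets_at_top Gam)"
    by (rule Lim_null_comparison[OF eventually_finite_subsets_at_top_weakI, rotated]) (use tail in auto)
  then have "((\<lambda>F. \<Psi> x - (\<Psi> x - (\<Sum>\<sigma>\<in>F. x \<sigma> * fock \<Psi> \<sigma>))) \<longlongrightarrow> \<Psi> x - 0) (finite_subsets_at_top Gam)"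
    by (intro tendsto_intros)
  then show ?thesis unfolding has_sum_def by simp
qed

lemma Sdual_eqI:
  assumes "\<Psi>1 \<in> Sdual" "\<Psi>2 \<in> Sdual" "\<And>\<sigma>. \<sigma> \<in> Gam \<Longrightarrow> fock \<Psi>1 \<sigma> = fock \<Psi>2 \<sigma>"
  shows "\<Psi>1 = \<Psi>2"
proof
  fix x
  show "\<Psi>1 x = \<Psi>2 x"
  proof (cases "x \<in> Sspace")
    case True
    have "((\<lambda>\<sigma>. x \<sigma> * fock \<Psi>1 \<sigma>) has_sum \<Psi>2 x) Gam"
      using Sdual_has_sum[OF assms(2) True] by (rule has_sum_cong[THEN iffD1, rotated]) (simp add: assms(3))
    then show ?thesis using Sdual_has_sum[OF assms(1) True] has_sum_unique by blast
  qed (simp add: Sdual_outside assms)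
qed

lemma norm_coeff_mult_le:
  assumes x: "x \<in> Sspace" and \<sigma>: "\<sigma> \<in> Gam" and bound: "cmod (c \<sigma>) \<le> lam \<sigma> ^ q * d"
  shows "cmod (x \<sigma> * c \<sigma>) \<le> pnorm (real q) x * d"
proof -
  have "0 \<le> lam \<sigma> ^ q * d" using bound norm_ge_zero order_trans by blast
  then have "0 \<le> d" using zero_less_power[OF lam_pos, of \<sigma> q] by (auto simp: zero_le_mult_iff)
  have "cmod (x \<sigma> * c \<sigma>) \<le> cmod (x \<sigma>) * (lam \<sigma> ^ q * d)"
    unfolding norm_mult by (intro mult_left_mono bound) simp
  also have "\<dots> = (lam \<sigma> ^ q * cmod (x \<sigma>)) * d" by simp
  also have "\<dots> \<le> pnorm (real q) x * d"
    by (intro mult_right_mono coeff_le_pnorm x \<sigma> \<open>0 \<le> d\<close>)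
  finally show ?thesis .
qed

lemma norm_pairing_le:
  assumes x: "x \<in> Sspace" and s: "((\<lambda>\<sigma>. x \<sigma> * c \<sigma>) has_sum s) Gam"
    and bound: "\<And>\<sigma>. \<sigma> \<in> Gam \<Longrightarrow> cmod (c \<sigma>) \<le> lam \<sigma> ^ q * d \<sigma>" and d: "d summable_on Gam"
  shows "cmod s \<le> pnorm (real q) x * infsum d Gam"
proof (rule norm_infsum_le[OF s])
  show "((\<lambda>\<sigma>. pnorm (real q) x * d \<sigma>) has_sum pnorm (real q) x * infsum d Gam) Gam"
    using d by (intro has_sum_cmult_right) simp
qed (rule norm_coeff_mult_le[OF x _ bound])

lemma summable_on_pairing:
  assumes x: "x \<in> Sspace"
    and bound: "\<And>\<sigma>. \<sigma> \<in> Gam \<Longrightarrow> cmod (c \<sigma>) \<le> lam \<sigma> ^ q * d \<sigma>" and d: "d summable_on Gam"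
  shows "(\<lambda>\<sigma>. x \<sigma> * c \<sigma>) summable_on Gam"
proof (rule abs_summable_summable)
  show "(\<lambda>\<sigma>. norm (x \<sigma> * c \<sigma>)) summable_on Gam"
    by (rule summable_on_comparison_test[OF summable_on_cmult_right[OF d, of "pnorm (real q) x"]])
       (auto intro: norm_coeff_mult_le[OF x _ bound])
qed

definition poly_bounded :: "(nat set \<Rightarrow> complex) \<Rightarrow> bool" where
  "poly_bounded g \<longleftrightarrow> (\<exists>K r. \<forall>\<sigma>\<in>Gam. cmod (g \<sigma>) \<le> K * lam \<sigma> ^ r)"

lemma poly_boundedI: "(\<And>\<sigma>. \<sigma> \<in> Gam \<Longrightarrow> cmod (g \<sigma>) \<le> K * lam \<sigma> ^ r) \<Longrightarrow> poly_bounded g"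
  unfolding poly_bounded_def by blast

lemma fock_bound:
  assumes "\<Phi> \<in> Sdual"
  obtains C r where "C \<ge> 0" "\<And>\<sigma>. \<sigma> \<in> Gam \<Longrightarrow> cmod (fock \<Phi> \<sigma>) \<le> C * lam \<sigma> ^ r"
proof -
  obtain q C where "C \<ge> 0" and C: "\<And>y. y \<in> Sspace \<Longrightarrow> cmod (\<Phi> y) \<le> C * pnorm (real q) y"
    using Sdual_bound[OF assms] by metis
  have "cmod (fock \<Phi> \<sigma>) \<le> C * lam \<sigma> ^ q" if "\<sigma> \<in> Gam" for \<sigma>
  proof -
    have "cmod (fock \<Phi> \<sigma>) \<le> C * pnorm (real q) (Zb \<sigma>)"
      unfolding fock_def by (rule C[OF Zb_in_Sspace[OF that]])
    also have "pnorm (real q) (Zb \<sigma>) = lam \<sigma> ^ q" by (rule pnorm_Zb[OF that])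
    finally show ?thesis .
  qed
  with \<open>C \<ge> 0\<close> show ?thesis by (rule that)
qed

text \<open>The witness is $\xi \mapsto \sum_\sigma \xi_\sigma g(\sigma)$, which converges because
  $\sum_\sigma \lambda_\sigma^{-2} < \infty$.\<close>

lemma ex_Sdual_fock:
  assumes "poly_bounded g"
  shows "\<exists>\<Psi>\<in>Sdual. \<forall>\<sigma>\<in>Gam. fock \<Psi> \<sigma> = g \<sigma>"
proof -
  obtain K r where g: "\<And>\<sigma>. \<sigma> \<in> Gam \<Longrightarrow> cmod (g \<sigma>) \<le> K * lam \<sigma> ^ r"
    using assms unfolding poly_bounded_def by blast
  define d where "d \<sigma> = K * (1 / lam \<sigma> ^ 2)" for \<sigma>
  have d: "d summable_on Gam"
    unfolding d_def by (rule summable_on_cmult_right[OF summable_on_inverse_lam_sq])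
  have bound: "cmod (g \<sigma>) \<le> lam \<sigma> ^ (r + 2) * d \<sigma>" if "\<sigma> \<in> Gam" for \<sigma>
    using g[OF that] lam_pos[of \<sigma>] by (simp add: d_def power_add field_simps power2_eq_square)
  note summable = summable_on_pairing[OF _ bound d]
  define \<Psi> where "\<Psi> x = (if x \<in> Sspace then infsum (\<lambda>\<sigma>. x \<sigma> * g \<sigma>) Gam else 0)" for x
  have "\<Psi> \<in> Sdual"
    unfolding Sdual_def
  proof (intro CollectI conjI allI impI)
    fix x y assume x: "x \<in> Sspace" and y: "y \<in> Sspace"
    show "\<Psi> (\<lambda>\<sigma>. x \<sigma> + y \<sigma>) = \<Psi> x + \<Psi> y"
      using x y Sspace_add[OF x y]
      by (simp add: \<Psi>_def distrib_right infsum_add summable)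
  next
    fix c x assume x: "x \<in> Sspace"
    show "\<Psi> (\<lambda>\<sigma>. c * x \<sigma>) = c * \<Psi> x"
      using x Sspace_scale[OF x]
      by (simp add: \<Psi>_def mult.assoc infsum_cmult_right summable)
  next
    show "\<exists>p\<ge>0. \<exists>C. \<forall>x\<in>Sspace. cmod (\<Psi> x) \<le> C * pnorm p x"
    proof (intro exI conjI ballI)
      fix x assume x: "x \<in> Sspace"
      have "cmod (\<Psi> x) \<le> pnorm (real (r + 2)) x * infsum d Gam"
        using norm_pairing_le[OF x has_sum_infsum[OF summable[OF x]] bound d] x by (simp add: \<Psi>_def)
      then show "cmod (\<Psi> x) \<le> infsum d Gam * pnorm (real (r + 2)) x" by (simp add: mult.commute)
    qed simp
  qed (simp add: \<Psi>_def)
  moreover have "fock \<Psi> \<sigma> = g \<sigma>" if "\<sigma> \<in> Gam" for \<sigma>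
  proof -
    have "infsum (\<lambda>\<tau>. Zb \<sigma> \<tau> * g \<tau>) Gam = infsum (\<lambda>\<tau>. Zb \<sigma> \<tau> * g \<tau>) {\<sigma>}"
      by (rule infsum_cong_neutral) (use that in \<open>auto simp: Zb_def\<close>)
    then show ?thesis using Zb_in_Sspace[OF that] by (simp add: fock_def \<Psi>_def Zb_def)
  qed
  ultimately show ?thesis by blast
qed

lemma Sdual_The_fock:
  assumes "poly_bounded g"
  shows "(THE \<Psi>. \<Psi> \<in> Sdual \<and> (\<forall>\<sigma>\<in>Gam. fock \<Psi> \<sigma> = g \<sigma>)) \<in> Sdual \<and>
    (\<forall>\<sigma>\<in>Gam. fock (THE \<Psi>. \<Psi> \<in> Sdual \<and> (\<forall>\<sigma>\<in>Gam. fock \<Psi> \<sigma> = g \<sigma>)) \<sigma> = g \<sigma>)"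
proof -
  obtain \<Psi> where "\<Psi> \<in> Sdual" "\<forall>\<sigma>\<in>Gam. fock \<Psi> \<sigma> = g \<sigma>"
    using ex_Sdual_fock[OF assms] by blast
  then have "\<exists>!\<Psi>. \<Psi> \<in> Sdual \<and> (\<forall>\<sigma>\<in>Gam. fock \<Psi> \<sigma> = g \<sigma>)"
    by (intro ex1I[of _ \<Psi>]) (auto intro: Sdual_eqI)
  then show ?thesis by (rule theI')
qed

section \<open>The spectral function\<close>

lemma has_sum_sum:
  fixes f :: "'i \<Rightarrow> 'a \<Rightarrow> 'b::topological_comm_monoid_add"
  assumes "finite I" "\<And>i. i \<in> I \<Longrightarrow> (f i has_sum a i) A"
  shows "((\<lambda>x. \<Sum>i\<in>I. f i x) has_sum (\<Sum>i\<in>I. a i)) A"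
  using assms by (induction I rule: finite_induct) (auto intro: has_sum_add)

lemma weight_nonneg: "is_2D_weight w \<Longrightarrow> 0 \<le> w j k"
  unfolding is_2D_weight_def by blast

lemma weight_summable: "is_2D_weight w \<Longrightarrow> summable (\<lambda>j. w j k)"
  unfolding is_2D_weight_def by blast

lemma weight_column_bound:
  assumes "is_2D_weight w"
  obtains W where "W \<ge> 0" "\<And>k. (\<Sum>j. w j k) \<le> W"
proof -
  obtain W where W: "\<And>k. (\<Sum>j. w j k) \<le> W"
    using assms unfolding is_2D_weight_def bdd_above_def by auto
  have "0 \<le> (\<Sum>j. w j 0)" by (intro suminf_nonneg weight_summable weight_nonneg assms)
  then show ?thesis using that W order_trans by blast
qed

lemma summable_weight_off:
  "is_2D_weight w \<Longrightarrow> summable (\<lambda>j. (1 - ind \<sigma> j) * w j k)"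
  by (rule summable_comparison_test'[where N=0 and g="\<lambda>j. w j k"])
     (auto simp: ind_def weight_nonneg weight_summable)

lemma weight_off_nonneg: "is_2D_weight w \<Longrightarrow> 0 \<le> (1 - ind \<sigma> j) * w j k"
  by (simp add: ind_def weight_nonneg)

lemma spectral_eq:
  assumes w: "is_2D_weight w" and "\<sigma> \<in> Gam"
  shows "spectral w \<sigma> = (\<Sum>k\<in>\<sigma>. w k k + (\<Sum>j. (1 - ind \<sigma> j) * w j k))"
proof -
  have f: "finite \<sigma>" using \<open>\<sigma> \<in> Gam\<close> by (simp add: Gam_def)
  have diag: "(\<Sum>\<^sub>\<infinity>j. ind \<sigma> j * w j j) = (\<Sum>j\<in>\<sigma>. w j j)"
    using f by (subst infsum_cong_neutral[where T=\<sigma>]) (auto simp: ind_def)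
  define S where "S k = (\<Sum>j. (1 - ind \<sigma> j) * w j k)" for k
  have column: "((\<lambda>(j, k'). if k' = k then (1 - ind \<sigma> j) * w j k else 0) has_sum S k) UNIV" for k
  proof -
    have "((\<lambda>j. (1 - ind \<sigma> j) * w j k) has_sum S k) UNIV"
      unfolding S_def
      by (rule sums_nonneg_imp_has_sum[OF summable_sums[OF summable_weight_off[OF w]]])
         (rule weight_off_nonneg[OF w])
    moreover have "inj (\<lambda>j::nat. (j, k))" by (auto simp: inj_def)
    ultimately have "((\<lambda>(j, k'). if k' = k then (1 - ind \<sigma> j) * w j k else 0) has_sum S k)
        (range (\<lambda>j. (j, k)))"
      by (subst has_sum_reindex) (auto simp: o_def)
    then show ?thesis by (rule has_sum_cong_neutral[THEN iffD1, rotated -1]) auto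
  qed
  have "((\<lambda>x. \<Sum>k\<in>\<sigma>. (\<lambda>(j, k'). if k' = k then (1 - ind \<sigma> j) * w j k else 0) x)
      has_sum (\<Sum>k\<in>\<sigma>. S k)) UNIV"
    by (rule has_sum_sum[OF f column])
  moreover have "(\<lambda>x. \<Sum>k\<in>\<sigma>. (\<lambda>(j, k'). if k' = k then (1 - ind \<sigma> j) * w j k else 0) x)
      = (\<lambda>(j, k). (1 - ind \<sigma> j) * ind \<sigma> k * w j k)"
    using f by (simp add: fun_eq_iff ind_def split_paired_All)
  ultimately have "(\<Sum>\<^sub>\<infinity>(j, k). (1 - ind \<sigma> j) * ind \<sigma> k * w j k) = (\<Sum>k\<in>\<sigma>. S k)"
    by (intro infsumI) simp
  then show ?thesis unfolding spectral_def diag S_def by (simp add: sum.distrib)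
qed

lemma spectral_nonneg:
  assumes "is_2D_weight w" "\<sigma> \<in> Gam"
  shows "0 \<le> spectral w \<sigma>"
  unfolding spectral_eq[OF assms]
  by (intro sum_nonneg add_nonneg_nonneg weight_nonneg suminf_nonneg summable_weight_off
      weight_off_nonneg assms(1))

lemma spectral_le_lam:
  assumes w: "is_2D_weight w" and W: "\<And>k. (\<Sum>j. w j k) \<le> W" and "\<sigma> \<in> Gam"
  shows "spectral w \<sigma> \<le> 2 * W * lam \<sigma>"
proof -
  have "w k k + (\<Sum>j. (1 - ind \<sigma> j) * w j k) \<le> 2 * W" for k
  proof -
    have "w k k \<le> (\<Sum>j. w j k)"
      using sum_le_suminf[OF weight_summable[OF w], of "{k}"] by (simp add: weight_nonneg[OF w])
    moreover have "(\<Sum>j. (1 - ind \<sigma> j) * w j k) \<le> (\<Sum>j. w j k)"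
      by (intro suminf_le summable_weight_off weight_summable w) (simp add: ind_def weight_nonneg[OF w])
    ultimately show ?thesis using W[of k] by linarith
  qed
  then have "spectral w \<sigma> \<le> (\<Sum>k\<in>\<sigma>. 2 * W)"
    unfolding spectral_eq[OF w \<open>\<sigma> \<in> Gam\<close>] by (intro sum_mono)
  also have "\<dots> = 2 * W * real (card \<sigma>)" by simp
  also have "\<dots> \<le> 2 * W * lam \<sigma>"
    using W[of 0] suminf_nonneg[OF weight_summable[OF w], of 0] weight_nonneg[OF w] \<open>\<sigma> \<in> Gam\<close>
    by (intro mult_left_mono card_le_lam) (auto simp: Gam_def intro: order_trans)
  finally show ?thesis .
qed

section \<open>The operators through their Fock transforms\<close>

lemma
  assumes "\<Phi> \<in> Sdual"
  shows ann_in_Sdual: "ann k \<Phi> \<in> Sdual"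
    and fock_ann: "\<sigma> \<in> Gam \<Longrightarrow> fock (ann k \<Phi>) \<sigma> = of_real (1 - ind \<sigma> k) * fock \<Phi> (insert k \<sigma>)"
proof -
  obtain C r where "C \<ge> 0" and C: "\<And>\<sigma>. \<sigma> \<in> Gam \<Longrightarrow> cmod (fock \<Phi> \<sigma>) \<le> C * lam \<sigma> ^ r"
    using fock_bound[OF assms] by blast
  have "cmod (of_real (1 - ind \<sigma> k) * fock \<Phi> (insert k \<sigma>)) \<le> C * (real k + 1) ^ r * lam \<sigma> ^ r"
    if "\<sigma> \<in> Gam" for \<sigma>
  proof -
    have "cmod (of_real (1 - ind \<sigma> k) * fock \<Phi> (insert k \<sigma>)) \<le> cmod (fock \<Phi> (insert k \<sigma>))"
      by (simp add: ind_def norm_mult)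
    also have "\<dots> \<le> C * lam (insert k \<sigma>) ^ r" using C that by simp
    also have "\<dots> \<le> C * ((real k + 1) * lam \<sigma>) ^ r"
      using lam_insert_le[of \<sigma> k] that lam_ge_1[of "insert k \<sigma>"] \<open>C \<ge> 0\<close>
      by (intro mult_left_mono power_mono) (auto simp: Gam_def)
    finally show ?thesis by (simp add: power_mult_distrib mult_ac)
  qed
  from Sdual_The_fock[OF poly_boundedI[OF this]]
  show "ann k \<Phi> \<in> Sdual" "\<sigma> \<in> Gam \<Longrightarrow> fock (ann k \<Phi>) \<sigma> = of_real (1 - ind \<sigma> k) * fock \<Phi> (insert k \<sigma>)"
    unfolding ann_def by auto
qed

lemma
  assumes "\<Phi> \<in> Sdual"
  shows cre_in_Sdual: "cre k \<Phi> \<in> Sdual"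
    and fock_cre: "\<sigma> \<in> Gam \<Longrightarrow> fock (cre k \<Phi>) \<sigma> = of_real (ind \<sigma> k) * fock \<Phi> (\<sigma> - {k})"
proof -
  obtain C r where "C \<ge> 0" and C: "\<And>\<sigma>. \<sigma> \<in> Gam \<Longrightarrow> cmod (fock \<Phi> \<sigma>) \<le> C * lam \<sigma> ^ r"
    using fock_bound[OF assms] by blast
  have "cmod (of_real (ind \<sigma> k) * fock \<Phi> (\<sigma> - {k})) \<le> C * lam \<sigma> ^ r" if "\<sigma> \<in> Gam" for \<sigma>
  proof -
    have "cmod (of_real (ind \<sigma> k) * fock \<Phi> (\<sigma> - {k})) \<le> cmod (fock \<Phi> (\<sigma> - {k}))"
      by (simp add: ind_def norm_mult)
    also have "\<dots> \<le> C * lam (\<sigma> - {k}) ^ r" using C that by simp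
    also have "\<dots> \<le> C * lam \<sigma> ^ r"
      using lam_Diff_singleton_le[of \<sigma> k] that lam_ge_1[of "\<sigma> - {k}"] \<open>C \<ge> 0\<close>
      by (intro mult_left_mono power_mono) (auto simp: Gam_def)
    finally show ?thesis .
  qed
  from Sdual_The_fock[OF poly_boundedI[OF this]]
  show "cre k \<Phi> \<in> Sdual" "\<sigma> \<in> Gam \<Longrightarrow> fock (cre k \<Phi>) \<sigma> = of_real (ind \<sigma> k) * fock \<Phi> (\<sigma> - {k})"
    unfolding cre_def by auto
qed

lemma
  assumes w: "is_2D_weight w" and "\<Phi> \<in> Sdual"
  shows GWN2_in_Sdual: "GWN2 w \<Phi> \<in> Sdual"
    and fock_GWN2: "\<sigma> \<in> Gam \<Longrightarrow> fock (GWN2 w \<Phi>) \<sigma> = of_real (spectral w \<sigma>) * fock \<Phi> \<sigma>"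
proof -
  obtain C r where C: "\<And>\<sigma>. \<sigma> \<in> Gam \<Longrightarrow> cmod (fock \<Phi> \<sigma>) \<le> C * lam \<sigma> ^ r"
    using fock_bound[OF \<open>\<Phi> \<in> Sdual\<close>] by blast
  obtain W where W: "\<And>k. (\<Sum>j. w j k) \<le> W" using weight_column_bound[OF w] by blast
  have "cmod (of_real (spectral w \<sigma>) * fock \<Phi> \<sigma>) \<le> 2 * W * C * lam \<sigma> ^ Suc r"
    if "\<sigma> \<in> Gam" for \<sigma>
  proof -
    have "cmod (of_real (spectral w \<sigma>) * fock \<Phi> \<sigma>) = spectral w \<sigma> * cmod (fock \<Phi> \<sigma>)"
      using spectral_nonneg[OF w that] by (simp add: norm_mult)
    also have "\<dots> \<le> (2 * W * lam \<sigma>) * (C * lam \<sigma> ^ r)"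
      using spectral_nonneg[OF w that] spectral_le_lam[OF w W that] C[OF that]
      by (intro mult_mono) auto
    finally show ?thesis by (simp add: mult_ac)
  qed
  from Sdual_The_fock[OF poly_boundedI[OF this]]
  show "GWN2 w \<Phi> \<in> Sdual" "\<sigma> \<in> Gam \<Longrightarrow> fock (GWN2 w \<Phi>) \<sigma> = of_real (spectral w \<sigma>) * fock \<Phi> \<sigma>"
    unfolding GWN2_def by auto
qed

definition cre_ann_symbol :: "nat \<Rightarrow> nat \<Rightarrow> nat set \<Rightarrow> real" where
  "cre_ann_symbol j k \<sigma> = ind \<sigma> k * (if j = k then 1 else 1 - ind \<sigma> j)"

lemma fock_cre_ann_cre_ann:
  assumes \<Phi>: "\<Phi> \<in> Sdual" and \<sigma>: "\<sigma> \<in> Gam"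
  shows "fock (cre k (ann j (cre j (ann k \<Phi>)))) \<sigma> = of_real (cre_ann_symbol j k \<sigma>) * fock \<Phi> \<sigma>"
proof -
  note Sdual = ann_in_Sdual[OF \<Phi>] cre_in_Sdual[OF ann_in_Sdual[OF \<Phi>]]
    ann_in_Sdual[OF cre_in_Sdual[OF ann_in_Sdual[OF \<Phi>]]]
  have "fock (cre k (ann j (cre j (ann k \<Phi>)))) \<sigma>
      = of_real (ind \<sigma> k * (1 - ind (\<sigma> - {k}) j) * ind (insert j (\<sigma> - {k})) j
          * (1 - ind (insert j (\<sigma> - {k}) - {j}) k))
        * fock \<Phi> (insert k (insert j (\<sigma> - {k}) - {j}))"
    using \<sigma> by (simp add: fock_cre fock_ann \<Phi> Sdual)
  also have "\<dots> = of_real (cre_ann_symbol j k \<sigma>) * fock \<Phi> \<sigma>"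
    by (cases "k \<in> \<sigma>"; cases "j \<in> \<sigma>") (auto simp: cre_ann_symbol_def ind_def insert_absorb)
  finally show ?thesis .
qed

section \<open>Square partial sums\<close>

definition spectral_partial :: "(nat \<Rightarrow> nat \<Rightarrow> real) \<Rightarrow> nat \<Rightarrow> nat set \<Rightarrow> real" where
  "spectral_partial w n \<sigma> = (\<Sum>j\<le>n. \<Sum>k\<le>n. w j k * cre_ann_symbol j k \<sigma>)"

lemma spectral_partial_eq:
  "spectral_partial w n \<sigma> = (\<Sum>k\<in>\<sigma> \<inter> {..n}. w k k + (\<Sum>j\<le>n. (1 - ind \<sigma> j) * w j k))"
proof -
  have column: "(\<Sum>j\<le>n. w j k * cre_ann_symbol j k \<sigma>)
      = (if k \<in> \<sigma> then w k k + (\<Sum>j\<le>n. (1 - ind \<sigma> j) * w j k) else 0)" if "k \<le> n" for k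
  proof (cases "k \<in> \<sigma>")
    case True
    then have "(\<Sum>j\<le>n. w j k * cre_ann_symbol j k \<sigma>)
        = (\<Sum>j\<le>n. (1 - ind \<sigma> j) * w j k + (if j = k then w k k else 0))"
      by (intro sum.cong refl) (auto simp: cre_ann_symbol_def ind_def)
    with True that show ?thesis by (simp add: sum.distrib)
  qed (simp add: cre_ann_symbol_def ind_def)
  have "spectral_partial w n \<sigma> = (\<Sum>k\<le>n. \<Sum>j\<le>n. w j k * cre_ann_symbol j k \<sigma>)"
    unfolding spectral_partial_def by (rule sum.swap)
  also have "\<dots> = (\<Sum>k\<in>{..n} \<inter> \<sigma>. w k k + (\<Sum>j\<le>n. (1 - ind \<sigma> j) * w j k))"
    by (simp add: column sum.inter_restrict)
  finally show ?thesis by (simp add: Int_commute)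
qed

lemma spectral_partial_nonneg: "is_2D_weight w \<Longrightarrow> 0 \<le> spectral_partial w n \<sigma>"
  unfolding spectral_partial_eq
  by (intro sum_nonneg add_nonneg_nonneg weight_nonneg weight_off_nonneg)

lemma spectral_partial_le_spectral:
  assumes w: "is_2D_weight w" and "\<sigma> \<in> Gam"
  shows "spectral_partial w n \<sigma> \<le> spectral w \<sigma>"
proof -
  have "finite \<sigma>" using \<open>\<sigma> \<in> Gam\<close> by (simp add: Gam_def)
  have "spectral_partial w n \<sigma> \<le> (\<Sum>k\<in>\<sigma>. w k k + (\<Sum>j\<le>n. (1 - ind \<sigma> j) * w j k))"
    unfolding spectral_partial_eq using \<open>finite \<sigma>\<close>
    by (intro sum_mono2)
      (auto intro!: add_nonneg_nonneg sum_nonneg weight_nonneg[OF w] weight_off_nonneg[OF w])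
  also have "\<dots> \<le> (\<Sum>k\<in>\<sigma>. w k k + (\<Sum>j. (1 - ind \<sigma> j) * w j k))"
    by (intro sum_mono add_left_mono sum_le_suminf summable_weight_off weight_off_nonneg w) auto
  finally show ?thesis unfolding spectral_eq[OF w \<open>\<sigma> \<in> Gam\<close>] .
qed

lemma spectral_partial_tendsto:
  assumes w: "is_2D_weight w" and "\<sigma> \<in> Gam"
  shows "(\<lambda>n. spectral_partial w n \<sigma>) \<longlonglongrightarrow> spectral w \<sigma>"
proof -
  obtain N where N: "\<sigma> \<subseteq> {..<N}"
    using \<open>\<sigma> \<in> Gam\<close> finite_nat_bounded by (auto simp: Gam_def)
  have "(\<lambda>n. \<Sum>k\<in>\<sigma>. w k k + (\<Sum>j\<le>n. (1 - ind \<sigma> j) * w j k))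
      \<longlonglongrightarrow> (\<Sum>k\<in>\<sigma>. w k k + (\<Sum>j. (1 - ind \<sigma> j) * w j k))"
    by (intro tendsto_sum tendsto_add tendsto_const summable_LIMSEQ' summable_weight_off w)
  moreover have "\<forall>\<^sub>F n in sequentially.
      (\<Sum>k\<in>\<sigma>. w k k + (\<Sum>j\<le>n. (1 - ind \<sigma> j) * w j k)) = spectral_partial w n \<sigma>"
    using eventually_ge_at_top[of N]
  proof eventually_elim
    case (elim n)
    then have "\<sigma> \<inter> {..n} = \<sigma>" using N by auto
    then show ?case by (simp add: spectral_partial_eq)
  qed
  ultimately show ?thesis
    unfolding spectral_eq[OF w \<open>\<sigma> \<in> Gam\<close>] by (rule Lim_transform_eventually)
qed

lemma has_sum_pairing_partial_sum:
  assumes \<Phi>: "\<Phi> \<in> Sdual" and x: "x \<in> Sspace"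
  shows "((\<lambda>\<sigma>. x \<sigma> * (of_real (spectral_partial w n \<sigma>) * fock \<Phi> \<sigma>)) has_sum
    (\<Sum>j\<le>n. \<Sum>k\<le>n. of_real (w j k) * cre k (ann j (cre j (ann k \<Phi>))) x)) Gam"
proof -
  have "((\<lambda>\<sigma>. x \<sigma> * (of_real (cre_ann_symbol j k \<sigma>) * fock \<Phi> \<sigma>)) has_sum
      cre k (ann j (cre j (ann k \<Phi>))) x) Gam" for j k
    using Sdual_has_sum[OF cre_in_Sdual[OF ann_in_Sdual[OF cre_in_Sdual[OF ann_in_Sdual[OF \<Phi>]]]] x]
    by (rule has_sum_cong[THEN iffD1, rotated]) (simp add: fock_cre_ann_cre_ann[OF \<Phi>])
  then have "((\<lambda>\<sigma>. \<Sum>j\<le>n. \<Sum>k\<le>n. of_real (w j k) * (x \<sigma> * (of_real (cre_ann_symbol j k \<sigma>) * fock \<Phi> \<sigma>)))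
      has_sum (\<Sum>j\<le>n. \<Sum>k\<le>n. of_real (w j k) * cre k (ann j (cre j (ann k \<Phi>))) x)) Gam"
    by (intro has_sum_sum has_sum_cmult_right) auto
  then show ?thesis
    unfolding spectral_partial_def of_real_sum sum_distrib_left sum_distrib_right
    by (simp add: mult_ac)
qed

section \<open>Convergence of the partial sums\<close>

lemma infsum_dominated_convergence:
  fixes f :: "nat \<Rightarrow> 'a \<Rightarrow> real"
  assumes h: "h summable_on A"
    and bound: "\<And>n x. x \<in> A \<Longrightarrow> \<bar>f n x\<bar> \<le> h x"
    and lim: "\<And>x. x \<in> A \<Longrightarrow> (\<lambda>n. f n x) \<longlonglongrightarrow> g x"
  shows "(\<lambda>n. infsum (f n) A) \<longlonglongrightarrow> infsum g A"
proof -
  have "(\<lambda>x. norm (h x)) summable_on A"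
    using h by (rule summable_on_cong[THEN iffD1, rotated])
      (metis abs_ge_zero abs_of_nonneg bound order_trans real_norm_def)
  then have h_abs: "Infinite_Set_Sum.abs_summable_on h A"
    using abs_summable_equivalent by blast
  have f_abs: "Infinite_Set_Sum.abs_summable_on (f n) A" for n
    by (rule abs_summable_on_comparison_test[OF h_abs])
      (use bound in \<open>force intro: order_trans[OF _ abs_ge_self]\<close>)
  have "\<bar>g x\<bar> \<le> h x" if "x \<in> A" for x
    using lim[OF that] bound[OF that] by (intro LIMSEQ_le_const2[OF tendsto_rabs]) auto
  then have g_abs: "Infinite_Set_Sum.abs_summable_on g A"
    by (intro abs_summable_on_comparison_test[OF h_abs]) (force intro: order_trans[OF _ abs_ge_self])
  have "(\<lambda>n. integral\<^sup>L (count_space A) (f n)) \<longlonglongrightarrow> integral\<^sup>L (count_space A) g"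
  proof (rule integral_dominated_convergence[where w=h])
    show "integrable (count_space A) h" using h_abs by (simp add: abs_summable_on_def)
  qed (use bound lim in \<open>auto simp: AE_count_space\<close>)
  then show ?thesis
    using f_abs g_abs by (simp add: infsetsum_def[symmetric] infsetsum_infsum)
qed

lemma spectral_remainder_bound:
  assumes w: "is_2D_weight w" and W: "\<And>k. (\<Sum>j. w j k) \<le> W" and \<sigma>: "\<sigma> \<in> Gam"
  shows "\<bar>(spectral w \<sigma> - spectral_partial w n \<sigma>) / lam \<sigma> ^ 3\<bar> \<le> 2 * W * (1 / lam \<sigma> ^ 2)"
proof -
  have "0 \<le> spectral w \<sigma> - spectral_partial w n \<sigma>"
    using spectral_partial_le_spectral[OF w \<sigma>] by simp
  moreover have "spectral w \<sigma> - spectral_partial w n \<sigma> \<le> 2 * W * lam \<sigma>"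
    using spectral_le_lam[OF w W \<sigma>] spectral_partial_nonneg[OF w, of n \<sigma>] by linarith
  ultimately show ?thesis
    using lam_pos[of \<sigma>] by (simp add: divide_le_eq power_eq_if)
qed

lemma
  assumes w: "is_2D_weight w"
  shows summable_on_spectral_remainder:
      "(\<lambda>\<sigma>. (spectral w \<sigma> - spectral_partial w n \<sigma>) / lam \<sigma> ^ 3) summable_on Gam"
    and infsum_spectral_remainder_tendsto_zero:
      "(\<lambda>n. \<Sum>\<^sub>\<infinity>\<sigma>\<in>Gam. (spectral w \<sigma> - spectral_partial w n \<sigma>) / lam \<sigma> ^ 3) \<longlonglongrightarrow> 0"
proof -
  obtain W where W: "\<And>k. (\<Sum>j. w j k) \<le> W" using weight_column_bound[OF w] by blast
  have h: "(\<lambda>\<sigma>. 2 * W * (1 / lam \<sigma> ^ 2)) summable_on Gam"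
    by (rule summable_on_cmult_right[OF summable_on_inverse_lam_sq])
  note bound = spectral_remainder_bound[OF w W]
  show "(\<lambda>\<sigma>. (spectral w \<sigma> - spectral_partial w n \<sigma>) / lam \<sigma> ^ 3) summable_on Gam"
    by (rule abs_summable_summable, rule summable_on_comparison_test[OF h]) (use bound in auto)
  have "(\<lambda>n. \<Sum>\<^sub>\<infinity>\<sigma>\<in>Gam. (spectral w \<sigma> - spectral_partial w n \<sigma>) / lam \<sigma> ^ 3)
      \<longlonglongrightarrow> (\<Sum>\<^sub>\<infinity>\<sigma>\<in>Gam. (spectral w \<sigma> - spectral w \<sigma>) / lam \<sigma> ^ 3)"
    by (intro infsum_dominated_convergence[OF h bound] tendsto_intros spectral_partial_tendsto w) auto
  then show "(\<lambda>n. \<Sum>\<^sub>\<infinity>\<sigma>\<in>Gam. (spectral w \<sigma> - spectral_partial w n \<sigma>) / lam \<sigma> ^ 3) \<longlonglongrightarrow> 0"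
    by simp
qed

lemma norm_partial_sum_minus_GWN2_le:
  assumes w: "is_2D_weight w" and \<Phi>: "\<Phi> \<in> Sdual" and x: "x \<in> Sspace"
    and C: "\<And>\<sigma>. \<sigma> \<in> Gam \<Longrightarrow> cmod (fock \<Phi> \<sigma>) \<le> C * lam \<sigma> ^ r"
  shows "cmod ((\<Sum>j\<le>n. \<Sum>k\<le>n. of_real (w j k) * cre k (ann j (cre j (ann k \<Phi>))) x) - GWN2 w \<Phi> x)
    \<le> pnorm (real (r + 3)) x *
      (C * (\<Sum>\<^sub>\<infinity>\<sigma>\<in>Gam. (spectral w \<sigma> - spectral_partial w n \<sigma>) / lam \<sigma> ^ 3))"
proof -
  define R where "R \<sigma> = (spectral w \<sigma> - spectral_partial w n \<sigma>) / lam \<sigma> ^ 3" for \<sigma>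
  have G: "((\<lambda>\<sigma>. x \<sigma> * (of_real (spectral w \<sigma>) * fock \<Phi> \<sigma>)) has_sum GWN2 w \<Phi> x) Gam"
    using Sdual_has_sum[OF GWN2_in_Sdual[OF w \<Phi>] x]
    by (rule has_sum_cong[THEN iffD1, rotated]) (simp add: fock_GWN2[OF w \<Phi>])
  have "((\<lambda>\<sigma>. x \<sigma> * (of_real (spectral_partial w n \<sigma>) * fock \<Phi> \<sigma>)
        + - (x \<sigma> * (of_real (spectral w \<sigma>) * fock \<Phi> \<sigma>))) has_sum
      ((\<Sum>j\<le>n. \<Sum>k\<le>n. of_real (w j k) * cre k (ann j (cre j (ann k \<Phi>))) x) + - GWN2 w \<Phi> x)) Gam"
    using G by (intro has_sum_add has_sum_pairing_partial_sum \<Phi> x) (simp add: has_sum_uminus)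
  then have "((\<lambda>\<sigma>. x \<sigma> * (of_real (spectral_partial w n \<sigma> - spectral w \<sigma>) * fock \<Phi> \<sigma>)) has_sum
      ((\<Sum>j\<le>n. \<Sum>k\<le>n. of_real (w j k) * cre k (ann j (cre j (ann k \<Phi>))) x) - GWN2 w \<Phi> x)) Gam"
    by (simp add: algebra_simps)
  moreover have "cmod (of_real (spectral_partial w n \<sigma> - spectral w \<sigma>) * fock \<Phi> \<sigma>)
      \<le> lam \<sigma> ^ (r + 3) * (C * R \<sigma>)" if \<sigma>: "\<sigma> \<in> Gam" for \<sigma>
  proof -
    have "cmod (of_real (spectral_partial w n \<sigma> - spectral w \<sigma>) * fock \<Phi> \<sigma>)
        \<le> (spectral w \<sigma> - spectral_partial w n \<sigma>) * (C * lam \<sigma> ^ r)"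
      unfolding norm_mult norm_of_real using spectral_partial_le_spectral[OF w \<sigma>, of n] C[OF \<sigma>]
      by (intro mult_mono) auto
    also have "\<dots> = lam \<sigma> ^ (r + 3) * (C * R \<sigma>)"
      using lam_pos[of \<sigma>] by (simp add: R_def power_add field_simps)
    finally show ?thesis .
  qed
  moreover have "(\<lambda>\<sigma>. C * R \<sigma>) summable_on Gam"
    unfolding R_def by (intro summable_on_cmult_right summable_on_spectral_remainder w)
  ultimately have "cmod ((\<Sum>j\<le>n. \<Sum>k\<le>n. of_real (w j k) * cre k (ann j (cre j (ann k \<Phi>))) x)
      - GWN2 w \<Phi> x) \<le> pnorm (real (r + 3)) x * (\<Sum>\<^sub>\<infinity>\<sigma>\<in>Gam. C * R \<sigma>)"
    by (rule norm_pairing_le[OF x])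
  then show ?thesis unfolding infsum_cmult_right' R_def .
qed

lemma strong_convI:
  assumes bound: "\<And>n x. x \<in> Sspace \<Longrightarrow> cmod (F n x - \<Psi> x) \<le> pnorm p x * D n"
    and "p \<ge> 0" and D: "D \<longlonglongrightarrow> 0"
  shows "strong_conv F \<Psi>"
  unfolding strong_conv_def
proof (intro allI impI)
  fix B :: "(nat set \<Rightarrow> complex) set" and \<epsilon> :: real
  assume "S_bounded B" and "\<epsilon> > 0"
  then have B: "B \<subseteq> Sspace" and "\<exists>M. \<forall>x\<in>B. pnorm p x \<le> M"
    using \<open>p \<ge> 0\<close> unfolding S_bounded_def by auto
  then obtain M where M: "\<And>x. x \<in> B \<Longrightarrow> pnorm p x \<le> M" by blast
  define K where "K = max M 0 + 1"
  have "K > 0" unfolding K_def by linarith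
  have "\<forall>\<^sub>F n in sequentially. \<bar>D n\<bar> < \<epsilon> / K"
    using tendsto_rabs_zero[OF D] \<open>\<epsilon> > 0\<close> \<open>K > 0\<close> by (intro order_tendstoD(2)) auto
  then show "\<forall>\<^sub>F n in sequentially. \<forall>x\<in>B. cmod (F n x - \<Psi> x) < \<epsilon>"
  proof eventually_elim
    case (elim n)
    show ?case
    proof
      fix x assume "x \<in> B"
      have "cmod (F n x - \<Psi> x) \<le> pnorm p x * D n" using B \<open>x \<in> B\<close> bound by blast
      also have "\<dots> \<le> pnorm p x * \<bar>D n\<bar>" by (intro mult_left_mono pnorm_nonneg) simp
      also have "\<dots> \<le> K * \<bar>D n\<bar>"
        using M[OF \<open>x \<in> B\<close>] by (intro mult_right_mono) (auto simp: K_def)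
      also have "\<dots> < \<epsilon>" using elim \<open>K > 0\<close> by (simp add: field_simps)
      finally show "cmod (F n x - \<Psi> x) < \<epsilon>" .
    qed
  qed
qed

theorem theorem3p6:
  fixes w :: "nat \<Rightarrow> nat \<Rightarrow> real"
    and \<Phi> :: "(nat set \<Rightarrow> complex) \<Rightarrow> complex"
  assumes "is_2D_weight w"
    and "\<Phi> \<in> Sdual"
  shows "strong_conv
           (\<lambda>n. \<lambda>x. \<Sum>j\<le>n. \<Sum>k\<le>n. complex_of_real (w j k) * cre k (ann j (cre j (ann k \<Phi>))) x)
           (GWN2 w \<Phi>)"
proof -
  obtain C r where C: "\<And>\<sigma>. \<sigma> \<in> Gam \<Longrightarrow> cmod (fock \<Phi> \<sigma>) \<le> C * lam \<sigma> ^ r"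
    using fock_bound[OF assms(2)] by blast
  show ?thesis
  proof (rule strong_convI[where p="real (r + 3)"])
    show "(\<lambda>n. C * (\<Sum>\<^sub>\<infinity>\<sigma>\<in>Gam. (spectral w \<sigma> - spectral_partial w n \<sigma>) / lam \<sigma> ^ 3)) \<longlonglongrightarrow> 0"
      using tendsto_mult_right_zero[OF infsum_spectral_remainder_tendsto_zero[OF assms(1)]] .
  qed (use norm_partial_sum_minus_GWN2_le[OF assms _ C] in auto)
qed

end
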